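(* Let $B$ be a $p\times q$ matrix, $G$ a $q\times q$ symmetric matrix and $G'$ a $p\times p$ symmetric matrix. Let $$A=\begin{bmatrix} G' & B & B\\ B^T & 0 & G\\ B^T & G & 0\end{bmatrix},\qquad C=\begin{bmatrix} G' & B & B\\ B^T & G & 0\\ B^T & 0 & G\end{bmatrix},$$ both of size $(p+2q)\times(p+2q)$. Then $A\oplus\begin{bmatrix} G & 0\\ 0 & G\end{bmatrix}$ and $C\oplus\begin{bmatrix}0 & G\\ G & 0\end{bmatrix}$ are cospectral.
   Context: For matrices $X,Y$, $X\oplus Y=\begin{bmatrix} X&0\\0&Y\end{bmatrix}$, and $0$ denotes a zero matrix of appropriate size. Two square matrices are cospectral if they have the same eigenvalues with the same multiplicities. *)

theory Defs
  imports "Jordan_Normal_Form.Char_Poly"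
begin

definition dsum :: "'a::zero mat \<Rightarrow> 'a mat \<Rightarrow> 'a mat" where
  "dsum X Y = four_block_mat X (0\<^sub>m (dim_row X) (dim_col Y)) (0\<^sub>m (dim_row Y) (dim_col X)) Y"

definition hcat :: "'a::zero mat \<Rightarrow> 'a mat \<Rightarrow> 'a mat" where
  "hcat X Y = four_block_mat X Y (0\<^sub>m 0 (dim_col X)) (0\<^sub>m 0 (dim_col Y))"

definition vcat :: "'a::zero mat \<Rightarrow> 'a mat \<Rightarrow> 'a mat" where
  "vcat X Y = four_block_mat X (0\<^sub>m (dim_row X) 0) Y (0\<^sub>m (dim_row Y) 0)"

definition cospectral :: "real mat \<Rightarrow> real mat \<Rightarrow> bool" where
  "cospectral X Y \<longleftrightarrow> square_mat X \<and> square_mat Y \<and> dim_row X = dim_row Y \<and>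
     (\<forall>z::complex. order z (char_poly (map_mat complex_of_real X)) =
                    order z (char_poly (map_mat complex_of_real Y)))"

end

theory Submission
  imports Defs
begin

text \<open>Write vectors in blocks \<open>(u, v\<^sub>1, v\<^sub>2, w\<^sub>1, w\<^sub>2)\<close> of sizes \<open>p, q, q, q, q\<close>.
  Both \<open>A\<close> and \<open>C\<close> leave the coordinates \<open>(u, v\<^sub>1 + v\<^sub>2)\<close> invariant and act on them by the
  same matrix \<open>[G', B; 2B\<^sup>T, G]\<close>, while on \<open>v\<^sub>1 - v\<^sub>2\<close> the matrix \<open>A\<close> acts as \<open>-G\<close> and \<open>C\<close>
  as \<open>G\<close>. Likewise \<open>[0, G; G, 0]\<close> acts as \<open>G\<close> on \<open>w\<^sub>1 + w\<^sub>2\<close> and as \<open>-G\<close> on \<open>w\<^sub>1 - w\<^sub>2\<close>.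
  Hence both matrices of the theorem are similar to \<open>[G', B; 2B\<^sup>T, G] \<oplus> G \<oplus> G \<oplus> -G\<close>, and
  the composite change of coordinates is an explicit invertible intertwiner.\<close>

lemma mult_four_block_mat_dims:
  assumes "dim_row A1 = dim_row B1" "dim_row C1 = dim_row D1"
    "dim_col A1 = dim_col C1" "dim_col B1 = dim_col D1"
    "dim_row A2 = dim_row B2" "dim_row C2 = dim_row D2"
    "dim_col A2 = dim_col C2" "dim_col B2 = dim_col D2"
    "dim_col A1 = dim_row A2" "dim_col B1 = dim_row C2"
  shows "four_block_mat A1 B1 C1 D1 * four_block_mat A2 B2 C2 D2 =
    four_block_mat (A1 * A2 + B1 * C2) (A1 * B2 + B1 * D2) (C1 * A2 + D1 * C2) (C1 * B2 + D1 * D2)"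
  using assms by (intro mult_four_block_mat) (auto intro!: carrier_matI)

lemma dim_hcat [simp]:
  "dim_row (hcat X Y) = dim_row X" "dim_col (hcat X Y) = dim_col X + dim_col Y"
  by (auto simp: hcat_def)

lemma dim_vcat [simp]:
  "dim_row (vcat X Y) = dim_row X + dim_row Y" "dim_col (vcat X Y) = dim_col X"
  by (auto simp: vcat_def)

lemma four_block_mat_empty:
  "four_block_mat M (0\<^sub>m (dim_row M) 0) (0\<^sub>m 0 (dim_col M)) (0\<^sub>m 0 0) = M"
  by (intro eq_matI) auto

lemma four_block_mat_mult_vcat:
  assumes "dim_row A = dim_row B" "dim_row C = dim_row D" "dim_col A = dim_col C"
    "dim_col B = dim_col D" "dim_col A = dim_row U" "dim_col B = dim_row V" "dim_col U = dim_col V"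
  shows "four_block_mat A B C D * vcat U V = vcat (A * U + B * V) (C * U + D * V)"
  unfolding vcat_def using assms
  by (subst mult_four_block_mat_dims) (auto intro!: cong_four_block_mat eq_matI)

lemma hcat_mult_four_block_mat:
  assumes "dim_row A = dim_row B" "dim_row C = dim_row D" "dim_col A = dim_col C"
    "dim_col B = dim_col D" "dim_row A = dim_col U" "dim_row C = dim_col V" "dim_row U = dim_row V"
  shows "hcat U V * four_block_mat A B C D = hcat (U * A + V * C) (U * B + V * D)"
  unfolding hcat_def using assms
  by (subst mult_four_block_mat_dims) (auto intro!: cong_four_block_mat eq_matI)

lemma vcat_mult:
  assumes "dim_col U = dim_col V" "dim_col U = dim_row M"
  shows "vcat U V * M = vcat (U * M) (V * M)"
proof -
  have "vcat U V * M = vcat U V * four_block_mat M (0\<^sub>m (dim_row M) 0) (0\<^sub>m 0 (dim_col M)) (0\<^sub>m 0 0)"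
    by (simp only: four_block_mat_empty)
  also have "\<dots> = vcat (U * M) (V * M)"
    unfolding vcat_def using assms
    by (subst mult_four_block_mat_dims) (auto intro!: cong_four_block_mat eq_matI)
  finally show ?thesis .
qed

lemma mult_hcat:
  assumes "dim_row U = dim_row V" "dim_col M = dim_row U"
  shows "M * hcat U V = hcat (M * U) (M * V)"
proof -
  have "M * hcat U V = four_block_mat M (0\<^sub>m (dim_row M) 0) (0\<^sub>m 0 (dim_col M)) (0\<^sub>m 0 0) * hcat U V"
    by (simp only: four_block_mat_empty)
  also have "\<dots> = hcat (M * U) (M * V)"
    unfolding hcat_def using assms
    by (subst mult_four_block_mat_dims) (auto intro!: cong_four_block_mat eq_matI)
  finally show ?thesis .
qed

lemma hcat_mult_vcat:
  assumes "dim_row U = dim_row V" "dim_col X = dim_col Y" "dim_col U = dim_row X" "dim_col V = dim_row Y"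
  shows "hcat U V * vcat X Y = U * X + V * Y"
proof -
  have "hcat U V * vcat X Y =
      four_block_mat (U * X + V * Y) (0\<^sub>m (dim_row U) 0) (0\<^sub>m 0 (dim_col X)) (0\<^sub>m 0 0)"
    unfolding hcat_def vcat_def using assms
    by (subst mult_four_block_mat_dims) (auto intro!: cong_four_block_mat eq_matI)
  also have "\<dots> = U * X + V * Y"
    using assms four_block_mat_empty[of "U * X + V * Y"] by simp
  finally show ?thesis .
qed

lemma vcat_mult_hcat:
  assumes "dim_col U = dim_col V" "dim_row X = dim_row Y" "dim_col U = dim_row X"
  shows "vcat U V * hcat X Y = four_block_mat (U * X) (U * Y) (V * X) (V * Y)"
  unfolding hcat_def vcat_def using assms
  by (subst mult_four_block_mat_dims) (auto intro!: cong_four_block_mat eq_matI)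

lemma four_block_mat_add_dims:
  assumes "dim_row A = dim_row A'" "dim_col A = dim_col A'" "dim_row D = dim_row D'"
    "dim_col D = dim_col D'" "dim_row A = dim_row B" "dim_row A' = dim_row B'"
    "dim_col B = dim_col B'" "dim_col B = dim_col D" "dim_row C = dim_row C'"
    "dim_col C = dim_col C'" "dim_row C = dim_row D" "dim_col C = dim_col A"
  shows "four_block_mat A B C D + four_block_mat A' B' C' D' =
    four_block_mat (A + A') (B + B') (C + C') (D + D')"
  using assms by (intro eq_matI) auto

lemma hcat_add_hcat:
  assumes "dim_row A = dim_row C" "dim_col A = dim_col C" "dim_row B = dim_row D"
    "dim_col B = dim_col D" "dim_row A = dim_row B"
  shows "hcat A B + hcat C D = hcat (A + C) (B + D)"
  unfolding hcat_def using assms by (intro eq_matI) auto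

lemma vcat_add_vcat:
  assumes "dim_row A = dim_row C" "dim_col A = dim_col C" "dim_row B = dim_row D"
    "dim_col B = dim_col D" "dim_col A = dim_col B"
  shows "vcat A B + vcat C D = vcat (A + C) (B + D)"
  unfolding vcat_def using assms by (intro eq_matI) auto

lemma hcat_zero_mat: "hcat (0\<^sub>m m n) (0\<^sub>m m k) = 0\<^sub>m m (n + k)"
  unfolding hcat_def by (intro eq_matI) auto

lemma vcat_zero_mat: "vcat (0\<^sub>m m k) (0\<^sub>m n k) = 0\<^sub>m (m + n) k"
  unfolding vcat_def by (intro eq_matI) auto

lemma add_zero_mat_dims [simp]:
  "dim_row A = m \<Longrightarrow> dim_col A = n \<Longrightarrow> A + 0\<^sub>m m n = (A :: 'a::monoid_add mat)"
  by (intro eq_matI) auto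

lemma zero_add_mat_dims [simp]:
  "dim_row A = m \<Longrightarrow> dim_col A = n \<Longrightarrow> 0\<^sub>m m n + A = (A :: 'a::monoid_add mat)"
  by (intro eq_matI) auto

lemma add_uminus_mat_dims [simp]:
  "dim_row A = m \<Longrightarrow> dim_col A = n \<Longrightarrow> A + - A = (0\<^sub>m m n :: 'a::group_add mat)"
  by (intro eq_matI) auto

lemma uminus_add_mat_dims [simp]:
  "dim_row A = m \<Longrightarrow> dim_col A = n \<Longrightarrow> - A + A = (0\<^sub>m m n :: 'a::group_add mat)"
  by (intro eq_matI) auto

lemma uminus_zero_mat [simp]: "- 0\<^sub>m m n = (0\<^sub>m m n :: 'a::group_add mat)"
  by (intro eq_matI) auto

lemma uminus_one_mat_mult [simp]: "dim_row A = n \<Longrightarrow> - 1\<^sub>m n * A = - (A :: 'a::ring_1 mat)"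
  by (intro eq_matI) (auto simp: scalar_prod_def sum.neutral if_distrib cong: if_cong)

lemma mult_uminus_one_mat [simp]: "dim_col A = n \<Longrightarrow> A * - 1\<^sub>m n = - (A :: 'a::ring_1 mat)"
  by (intro eq_matI) (auto simp: scalar_prod_def if_distrib cong: if_cong)

lemma two_one_mat_mult [simp]: "dim_row A = n \<Longrightarrow> (1\<^sub>m n + 1\<^sub>m n) * A = A + (A :: 'a::semiring_1 mat)"
  by (subst add_mult_distrib_mat[of _ n n]) auto

lemma mult_two_one_mat [simp]: "dim_col A = n \<Longrightarrow> A * (1\<^sub>m n + 1\<^sub>m n) = A + (A :: 'a::semiring_1 mat)"
  by (subst mult_add_distrib_mat[of _ "dim_row A" n]) auto

text \<open>The rules for a product with a general factor are restricted to four-block factors;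
  otherwise they fire before the four-block rules and block the normalisation.\<close>
lemmas block_mat_mult_simps =
  mult_four_block_mat_dims four_block_mat_mult_vcat hcat_mult_four_block_mat
  vcat_mult[where M = "four_block_mat A B C D" for A B C D]
  mult_hcat[where M = "four_block_mat A B C D" for A B C D]
  hcat_mult_vcat vcat_mult_hcat
  four_block_mat_add_dims hcat_add_hcat vcat_add_vcat hcat_zero_mat vcat_zero_mat

text \<open>The full simpset is extremely slow on the concrete block matrices below, so their
  dimensions are computed with this list alone.\<close>
lemmas block_mat_dims =
  index_mat_four_block(2,3) dim_hcat dim_vcat index_zero_mat(2,3) index_one_mat(2,3)
  index_add_mat(2,3) index_uminus_mat(2,3) index_transpose_mat(2,3)

lemma similar_mat_imp_cospectral:
  assumes "similar_mat A B"
  shows "cospectral A B"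
proof -
  obtain n where A: "A \<in> carrier_mat n n" and B: "B \<in> carrier_mat n n"
    using similar_matD[OF assms] by auto
  have "char_poly A = char_poly B"
    using assms by (rule char_poly_similar)
  then have "char_poly (map_mat complex_of_real A) = char_poly (map_mat complex_of_real B)"
    by (simp add: of_real_hom.char_poly_hom[OF A] of_real_hom.char_poly_hom[OF B])
  then show ?thesis
    using A B unfolding cospectral_def by simp
qed

lemma similar_mat_of_intertwining:
  fixes A B T S :: "'a::field mat"
  assumes A: "A \<in> carrier_mat n n" and B: "B \<in> carrier_mat n n"
    and T: "T \<in> carrier_mat n n" and S: "S \<in> carrier_mat n n"
    and intertwine: "T * A = B * T"
    and TS: "T * S = c \<cdot>\<^sub>m 1\<^sub>m n" and "c \<noteq> 0"
  shows "similar_mat A B"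
proof -
  define S' where "S' = inverse c \<cdot>\<^sub>m S"
  have S': "S' \<in> carrier_mat n n"
    using S by (simp add: S'_def)
  have "T * S' = inverse c \<cdot>\<^sub>m (T * S)"
    using T S by (simp add: S'_def mult_smult_distrib)
  also have "\<dots> = 1\<^sub>m n"
    using \<open>c \<noteq> 0\<close> by (auto simp: TS intro!: eq_matI)
  finally have TS': "T * S' = 1\<^sub>m n" .
  have S'T: "S' * T = 1\<^sub>m n"
    using mat_mult_left_right_inverse[OF T S' TS'] .
  have "A = S' * T * A"
    using A by (simp add: S'T)
  also have "\<dots> = S' * B * T"
    using A B T S' by (simp add: assoc_mult_mat[of S' n n] intertwine)
  finally show ?thesis
    using A B T S' TS' S'T by (intro similar_matI[of _ _ _ _ n]) auto
qed

abbreviation bordered_mat :: "'a::zero mat \<Rightarrow> 'a mat \<Rightarrow> 'a mat \<Rightarrow> 'a mat" where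
  "bordered_mat G' B D \<equiv> four_block_mat G' (hcat B B) (vcat (transpose_mat B) (transpose_mat B)) D"

abbreviation double_diag_mat :: "nat \<Rightarrow> 'a::zero mat \<Rightarrow> 'a mat" where
  "double_diag_mat q G \<equiv> four_block_mat G (0\<^sub>m q q) (0\<^sub>m q q) G"

abbreviation double_antidiag_mat :: "nat \<Rightarrow> 'a::zero mat \<Rightarrow> 'a mat" where
  "double_antidiag_mat q G \<equiv> four_block_mat (0\<^sub>m q q) G G (0\<^sub>m q q)"

text \<open>In the blocks \<open>(u, v\<^sub>1, v\<^sub>2, w\<^sub>1, w\<^sub>2)\<close>, the intertwiner is
  \<open>(2u, v\<^sub>1 + v\<^sub>2 + w\<^sub>1, v\<^sub>1 + v\<^sub>2 - w\<^sub>1, v\<^sub>1 - v\<^sub>2 + w\<^sub>2, v\<^sub>2 - v\<^sub>1 + w\<^sub>2)\<close>: its second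
  and third blocks have sum \<open>2(v\<^sub>1 + v\<^sub>2)\<close> and difference \<open>2w\<^sub>1\<close>, its last two blocks have
  sum \<open>2w\<^sub>2\<close> and difference \<open>2(v\<^sub>1 - v\<^sub>2)\<close>.\<close>

definition intertwiner :: "nat \<Rightarrow> nat \<Rightarrow> 'a::ring_1 mat" where
  "intertwiner p q = four_block_mat
     (four_block_mat (1\<^sub>m p + 1\<^sub>m p) (0\<^sub>m p (q + q)) (0\<^sub>m (q + q) p)
       (four_block_mat (1\<^sub>m q) (1\<^sub>m q) (1\<^sub>m q) (1\<^sub>m q)))
     (vcat (0\<^sub>m p (q + q)) (four_block_mat (1\<^sub>m q) (0\<^sub>m q q) (- 1\<^sub>m q) (0\<^sub>m q q)))
     (hcat (0\<^sub>m (q + q) p) (four_block_mat (1\<^sub>m q) (- 1\<^sub>m q) (- 1\<^sub>m q) (1\<^sub>m q)))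
     (four_block_mat (0\<^sub>m q q) (1\<^sub>m q) (0\<^sub>m q q) (1\<^sub>m q))"

lemma intertwiner_carrier:
  "intertwiner p q \<in> carrier_mat (p + (q + q) + (q + q)) (p + (q + q) + (q + q))"
  unfolding intertwiner_def carrier_mat_def by (simp only: block_mat_dims mem_Collect_eq simp_thms)

definition intertwiner_inverse_4 :: "nat \<Rightarrow> nat \<Rightarrow> 'a::ring_1 mat" where
  "intertwiner_inverse_4 p q = four_block_mat
     (four_block_mat (1\<^sub>m p + 1\<^sub>m p) (0\<^sub>m p (q + q)) (0\<^sub>m (q + q) p)
       (four_block_mat (1\<^sub>m q) (1\<^sub>m q) (1\<^sub>m q) (1\<^sub>m q)))
     (vcat (0\<^sub>m p (q + q)) (four_block_mat (1\<^sub>m q) (- 1\<^sub>m q) (- 1\<^sub>m q) (1\<^sub>m q)))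
     (hcat (0\<^sub>m (q + q) p)
       (four_block_mat (1\<^sub>m q + 1\<^sub>m q) (- (1\<^sub>m q + 1\<^sub>m q)) (0\<^sub>m q q) (0\<^sub>m q q)))
     (four_block_mat (0\<^sub>m q q) (0\<^sub>m q q) (1\<^sub>m q + 1\<^sub>m q) (1\<^sub>m q + 1\<^sub>m q))"

lemma intertwiner_inverse_4_carrier:
  "intertwiner_inverse_4 p q \<in> carrier_mat (p + (q + q) + (q + q)) (p + (q + q) + (q + q))"
  unfolding intertwiner_inverse_4_def carrier_mat_def by (simp only: block_mat_dims mem_Collect_eq simp_thms)

lemma smult_one_mat_add:
  "c \<cdot>\<^sub>m 1\<^sub>m (m + n) = four_block_mat (c \<cdot>\<^sub>m 1\<^sub>m m) (0\<^sub>m m n) (0\<^sub>m n m) (c \<cdot>\<^sub>m 1\<^sub>m n)"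
  for c :: "'a::semiring_1"
  by (intro eq_matI) auto

lemma one_mat_sum_simps:
  "1\<^sub>m n + 1\<^sub>m n + (1\<^sub>m n + 1\<^sub>m n) = (4 :: 'a::ring_1) \<cdot>\<^sub>m 1\<^sub>m n"
  "1\<^sub>m n + 1\<^sub>m n + - (- 1\<^sub>m n + - 1\<^sub>m n) = (4 :: 'a) \<cdot>\<^sub>m 1\<^sub>m n"
  "1\<^sub>m n + 1\<^sub>m n + (- 1\<^sub>m n + - 1\<^sub>m n) = (0\<^sub>m n n :: 'a mat)"
  "- 1\<^sub>m n + - 1\<^sub>m n + (1\<^sub>m n + 1\<^sub>m n) = (0\<^sub>m n n :: 'a mat)"
  by (auto intro!: eq_matI)

lemma intertwiner_mult_inverse_4:
  "intertwiner p q * intertwiner_inverse_4 p q = (4 :: 'a::ring_1) \<cdot>\<^sub>m 1\<^sub>m (p + (q + q) + (q + q))"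
  unfolding intertwiner_def intertwiner_inverse_4_def
  by (simp add: block_mat_mult_simps smult_one_mat_add one_mat_sum_simps)

lemma intertwiner_intertwines:
  fixes B G G' :: "'a::ring_1 mat"
  assumes "B \<in> carrier_mat p q" "G \<in> carrier_mat q q" "G' \<in> carrier_mat p p"
  shows "intertwiner p q * dsum (bordered_mat G' B (double_antidiag_mat q G)) (double_diag_mat q G) =
    dsum (bordered_mat G' B (double_diag_mat q G)) (double_antidiag_mat q G) * intertwiner p q"
proof -
  have "dim_row B = p" "dim_col B = q" "dim_row G = q" "dim_col G = q" "dim_row G' = p" "dim_col G' = p"
    using assms by auto
  then show ?thesis
    unfolding intertwiner_def dsum_def by (simp add: block_mat_mult_simps)
qed

theorem theorem3p17:
  fixes p q :: nat and B G G' :: "real mat"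
  assumes "B \<in> carrier_mat p q"
    and "G \<in> carrier_mat q q" and "transpose_mat G = G"
    and "G' \<in> carrier_mat p p" and "transpose_mat G' = G'"
  shows "cospectral
     (dsum (four_block_mat G' (hcat B B) (vcat (transpose_mat B) (transpose_mat B))
                           (four_block_mat (0\<^sub>m q q) G G (0\<^sub>m q q)))
           (four_block_mat G (0\<^sub>m q q) (0\<^sub>m q q) G))
     (dsum (four_block_mat G' (hcat B B) (vcat (transpose_mat B) (transpose_mat B))
                           (four_block_mat G (0\<^sub>m q q) (0\<^sub>m q q) G))
           (four_block_mat (0\<^sub>m q q) G G (0\<^sub>m q q)))"
    (is "cospectral ?X ?Y")
proof -
  let ?n = "p + (q + q) + (q + q)"
  have "dim_row B = p" "dim_col B = q" "dim_row G = q" "dim_col G = q" "dim_row G' = p" "dim_col G' = p"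
    using assms by auto
  then have "?X \<in> carrier_mat ?n ?n" "?Y \<in> carrier_mat ?n ?n"
    unfolding carrier_mat_def dsum_def by (simp_all only: block_mat_dims mem_Collect_eq simp_thms)
  then have "similar_mat ?X ?Y"
    using intertwiner_carrier intertwiner_inverse_4_carrier
      intertwiner_intertwines[OF assms(1,2,4)] intertwiner_mult_inverse_4
    by (rule similar_mat_of_intertwining) simp
  then show ?thesis
    by (rule similar_mat_imp_cospectral)
qed

end
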